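(* Let $v_1,\dots,v_n$ be gross substitutes valuations over $m$ items. Consider the English Walrasian mechanism with bidding space $\mathcal{B}=\textsc{Gs}$. Then this mechanism has a pure Nash equilibrium $\mathbf{b}$ (with respect to the true valuations $v_1,\dots,v_n$) whose allocation maximizes $\sum_i v_i(\mathbf{x}_i)$ over all partitions of the items, and in which every agent's strategy $b_i$ is a non-exposure strategy, i.e. $\pi_i(b_i,\mathbf{b}'_{-i})\le v_i(\mathbf{x}_i(b_i,\mathbf{b}'_{-i}))$ for every $\mathbf{b}'_{-i}\in\mathcal{B}^{n-1}$.
   Context: There are $m$ items and $n$ agents. A valuation is a function $v:\{0,1\}^m\to\mathbb{R}_+$ with $v(\mathbf{0})=0$ and $v(\mathbf{x})\le v(\mathbf{y})$ whenever $\mathbf{x}\le\mathbf{y}$; it is extended to $\mathbb{Z}_+^m$ by $v(\mathbf{x})=v(\min(\mathbf{x},\mathbf{1}))$ (componentwise min). For prices $\mathbf{p}\in\mathbb{R}^m_+$ the demand is $D_v(\mathbf{p})=\arg\max_{\mathbf{x}\in\{0,1\}^m}[v(\mathbf{x})-\mathbf{p}\cdot\mathbf{x}]$. $v$ is gross substitutes ($v\in\textsc{Gs}$) if for any prices $\mathbf{p}\le\mathbf{q}$, with $S=\{j:p_j=q_j\}$, and any $\mathbf{x}\in D_v(\mathbf{p})$, there is $\mathbf{y}\in D_v(\mathbf{q})$ with $\mathbf{y}\ge \mathbf{x}\cdot\mathbf{1}_S$ componentwise, i.e. $y_j\ge x_j$ for all $j\in S$. For declared valuations $\mathbf{b}=(b_1,\dots,b_n)$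 define $W^{\mathbf{b}}:\mathbb{Z}_+^m\to\mathbb{R}_+$ by $W^{\mathbf{b}}(\mathbf{x})=\max\{\sum_i b_i(\mathbf{x}_i):\sum_i\mathbf{x}_i\le\mathbf{x},\ \mathbf{x}_i\in\{0,1\}^m\}$, and marginals $f(\mathbf{y}\mid\mathbf{x})=f(\mathbf{y}+\mathbf{x})-f(\mathbf{x})$; $\mathbf{1}_j$ is the $j$-th unit vector and $\mathbf{1}$ the all-ones vector. The English Walrasian mechanism: each agent $i$ reports $b_i\in\mathcal{B}$; the mechanism allocates bundles $\mathbf{x}_1(\mathbf{b}),\dots,\mathbf{x}_n(\mathbf{b})$ forming a partition of the items maximizing $\sum_i b_i(\mathbf{x}_i)$, and charges $\pi_i(\mathbf{b})=\sum_{j:\, x_{ij}(\mathbf{b})=1}W^{\mathbf{b}}(\mathbf{1}_j\mid\mathbf{1})$ (the minimal Walrasian prices of the declared market). Agent $i$'s utility is $u_i(v_i;\mathbf{b})=v_i(\mathbf{x}_i(\mathbf{b}))-\pi_i(\mathbf{b})$. A pure Nash equilibrium is a profile $\mathbf{b}\in\mathcal{B}^n$ with $u_i(v_i;\mathbf{b})\ge u_i(v_i;b_i',\mathbf{b}_{-i})$ for all $i$ and all $b_i'\in\mathcal{B}$. *)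

theory Defs
  imports Complex_Main
begin

(* Items: finite type 'item ; agents: finite type 'agent.
   Bundles in {0,1}^m are represented as sets of items; bundles in Z_+^m as
   functions 'item => nat. *)

definition valuation :: "('item::finite set \<Rightarrow> real) \<Rightarrow> bool" where
  "valuation v \<longleftrightarrow> v {} = 0 \<and> (\<forall>S. 0 \<le> v S) \<and> (\<forall>S T. S \<subseteq> T \<longrightarrow> v S \<le> v T)"

definition demand :: "('item::finite set \<Rightarrow> real) \<Rightarrow> ('item \<Rightarrow> real) \<Rightarrow> 'item set set" where
  "demand v p = {x. \<forall>y. v y - (\<Sum>j\<in>y. p j) \<le> v x - (\<Sum>j\<in>x. p j)}"

definition GS :: "('item::finite set \<Rightarrow> real) \<Rightarrow> bool" where
  "GS v \<longleftrightarrow> valuation v \<and>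
     (\<forall>p q. (\<forall>j. 0 \<le> p j \<and> p j \<le> q j) \<longrightarrow>
        (\<forall>x\<in>demand v p. \<exists>y\<in>demand v q. \<forall>j. p j = q j \<longrightarrow> j \<in> x \<longrightarrow> j \<in> y))"

definition W :: "('agent::finite \<Rightarrow> 'item::finite set \<Rightarrow> real) \<Rightarrow> ('item \<Rightarrow> nat) \<Rightarrow> real" where
  "W b x = Max ((\<lambda>S. \<Sum>i\<in>UNIV. b i (S i)) `
                 {S :: 'agent \<Rightarrow> 'item set. \<forall>j. card {i. j \<in> S i} \<le> x j})"

definition min_price :: "('agent::finite \<Rightarrow> 'item::finite set \<Rightarrow> real) \<Rightarrow> 'item \<Rightarrow> real" where
  "min_price b j = W b (\<lambda>k. 1 + (if k = j then 1 else 0)) - W b (\<lambda>_. 1)"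

definition is_partition :: "('agent::finite \<Rightarrow> 'item::finite set) \<Rightarrow> bool" where
  "is_partition X \<longleftrightarrow> (\<forall>i k. i \<noteq> k \<longrightarrow> X i \<inter> X k = {}) \<and> (\<Union>i. X i) = UNIV"

definition optimal_partition ::
  "('agent::finite \<Rightarrow> 'item::finite set \<Rightarrow> real) \<Rightarrow> ('agent \<Rightarrow> 'item set) \<Rightarrow> bool" where
  "optimal_partition b X \<longleftrightarrow> is_partition X \<and>
     (\<forall>Y. is_partition Y \<longrightarrow> (\<Sum>i\<in>UNIV. b i (Y i)) \<le> (\<Sum>i\<in>UNIV. b i (X i)))"

(* An allocation rule of the English Walrasian mechanism: for every profile of
   GS bids it returns a welfare-maximizing partition (arbitrary tie-breaking). *)
definition EW_allocation_rule ::
  "(('agent::finite \<Rightarrow> 'item::finite set \<Rightarrow> real) \<Rightarrow> 'agent \<Rightarrow> 'item set) \<Rightarrow> bool" where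
  "EW_allocation_rule X \<longleftrightarrow> (\<forall>b. (\<forall>i. GS (b i)) \<longrightarrow> optimal_partition b (X b))"

definition payment ::
  "(('agent::finite \<Rightarrow> 'item::finite set \<Rightarrow> real) \<Rightarrow> 'agent \<Rightarrow> 'item set)
     \<Rightarrow> ('agent \<Rightarrow> 'item set \<Rightarrow> real) \<Rightarrow> 'agent \<Rightarrow> real" where
  "payment X b i = (\<Sum>j\<in>X b i. min_price b j)"

definition utility ::
  "(('agent::finite \<Rightarrow> 'item::finite set \<Rightarrow> real) \<Rightarrow> 'agent \<Rightarrow> 'item set)
     \<Rightarrow> ('item set \<Rightarrow> real) \<Rightarrow> ('agent \<Rightarrow> 'item set \<Rightarrow> real) \<Rightarrow> 'agent \<Rightarrow> real" where
  "utility X vi b i = vi (X b i) - payment X b i"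

definition pure_nash ::
  "(('agent::finite \<Rightarrow> 'item::finite set \<Rightarrow> real) \<Rightarrow> 'agent \<Rightarrow> 'item set)
     \<Rightarrow> ('agent \<Rightarrow> 'item set \<Rightarrow> real) \<Rightarrow> ('agent \<Rightarrow> 'item set \<Rightarrow> real) \<Rightarrow> bool" where
  "pure_nash X v b \<longleftrightarrow> (\<forall>i. GS (b i)) \<and>
     (\<forall>i bi'. GS bi' \<longrightarrow> utility X (v i) (b(i := bi')) i \<le> utility X (v i) b i)"

definition non_exposure ::
  "(('agent::finite \<Rightarrow> 'item::finite set \<Rightarrow> real) \<Rightarrow> 'agent \<Rightarrow> 'item set)
     \<Rightarrow> ('item set \<Rightarrow> real) \<Rightarrow> 'agent \<Rightarrow> ('item set \<Rightarrow> real) \<Rightarrow> bool" where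
  "non_exposure X vi i bi \<longleftrightarrow>
     (\<forall>b'. (\<forall>k. k \<noteq> i \<longrightarrow> GS (b' k)) \<longrightarrow>
        payment X (b'(i := bi)) i \<le> vi (X (b'(i := bi)) i))"

end

theory Submission
  imports Defs
begin

text \<open>Fix a welfare-maximising partition \<open>A\<close> for the true valuations and let every agent bid
  the truncation \<open>b\<^sub>i(S) = v\<^sub>i(S \<inter> A\<^sub>i)\<close>, which is again gross substitutes. In the declared market
  all minimal Walrasian prices vanish and each agent receives at least \<open>v\<^sub>i(A\<^sub>i)\<close> for free.
  If agent \<open>i\<close> deviates and wins \<open>Y\<^sub>i\<close> at minimal Walrasian prices \<open>p\<close>, the value the other
  (submodular) bidders lose on their parts of \<open>A\<close> is at most \<open>p(Y\<^sub>i)\<close>; optimality of \<open>A\<close> then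
  gives \<open>v\<^sub>i(Y\<^sub>i) - p(Y\<^sub>i) \<le> v\<^sub>i(A\<^sub>i)\<close>. Non-exposure holds because in a market of gross
  substitutes bidders minimal Walrasian prices are individually rational; this is shown by
  running an ascending auction with increment \<open>\<epsilon>\<close> to an approximate Walrasian equilibrium and
  letting \<open>\<epsilon> \<rightarrow> 0\<close>.\<close>

lemma valuation_mono: "valuation v \<Longrightarrow> S \<subseteq> T \<Longrightarrow> v S \<le> v T"
  by (simp add: valuation_def)

lemma valuation_nonneg: "valuation v \<Longrightarrow> 0 \<le> v S"
  by (simp add: valuation_def)

lemma valuation_empty: "valuation v \<Longrightarrow> v {} = 0"
  by (simp add: valuation_def)

lemma GS_valuation: "GS v \<Longrightarrow> valuation v"
  by (simp add: GS_def)

lemma finite_has_maximizer: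
  fixes f :: "'a \<Rightarrow> real"
  assumes "finite A" "A \<noteq> {}"
  obtains x where "x \<in> A" "\<And>y. y \<in> A \<Longrightarrow> f y \<le> f x"
proof -
  have "Max (f ` A) \<in> f ` A" using assms by simp
  then obtain x where x: "x \<in> A" "f x = Max (f ` A)" by auto
  have "f y \<le> f x" if "y \<in> A" for y using assms that x(2) by simp
  with x(1) show thesis using that by blast
qed

lemma demand_nonempty: "demand (v :: 'i::finite set \<Rightarrow> real) p \<noteq> {}"
proof -
  obtain x :: "'i set" where "\<And>y. v y - (\<Sum>j\<in>y. p j) \<le> v x - (\<Sum>j\<in>x. p j)"
    using finite_has_maximizer[of UNIV "\<lambda>x. v x - (\<Sum>j\<in>x. p j)"] by auto
  then show ?thesis unfolding demand_def by blast
qed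

lemma surplus_neg_if_overpriced:
  fixes v :: "'i::finite set \<Rightarrow> real"
  assumes "valuation v" "\<forall>l. 0 \<le> p l" "j \<in> y" "v UNIV < p j"
  shows "v y - (\<Sum>l\<in>y. p l) < 0"
proof -
  have "p j \<le> (\<Sum>l\<in>y. p l)" by (rule member_le_sum) (use assms in auto)
  moreover have "v y \<le> v UNIV" using assms(1) by (rule valuation_mono) simp
  ultimately show ?thesis using assms(4) by linarith
qed

lemma demand_subset_if_overpriced:
  fixes v :: "'i::finite set \<Rightarrow> real"
  assumes val: "valuation v" and p0: "\<forall>l. 0 \<le> p l" and over: "\<forall>l. l \<notin> A \<longrightarrow> v UNIV < p l"
    and x: "x \<in> demand v p"
  shows "x \<subseteq> A"
proof
  fix j assume "j \<in> x"
  have "v {} - 0 \<le> v x - (\<Sum>l\<in>x. p l)" using x unfolding demand_def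
    by (metis sum.empty mem_Collect_eq)
  then show "j \<in> A"
    using surplus_neg_if_overpriced[OF val p0 \<open>j \<in> x\<close>] over valuation_empty[OF val] by force
qed

section \<open>Gross substitutes valuations are submodular\<close>

lemma GS_marginal_pair:
  fixes v :: "'i::finite set \<Rightarrow> real"
  assumes gs: "GS v" and aS: "a \<notin> S" and bS: "b \<notin> S" and ab: "a \<noteq> b"
  shows "v (S \<union> {a,b}) - v (S \<union> {b}) \<le> v (S \<union> {a}) - v S"
proof (rule ccontr)
  assume neg: "\<not> ?thesis"
  have val: "valuation v" using gs by (rule GS_valuation)
  define \<alpha> where "\<alpha> = v (S \<union> {a}) - v S"
  define \<beta> where "\<beta> = v (S \<union> {a,b}) - v (S \<union> {b})"
  define \<gamma> where "\<gamma> = (\<alpha> + \<beta>) / 2"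
  define H where "H = v UNIV + 1"
  have \<alpha>0: "0 \<le> \<alpha>" unfolding \<alpha>_def using valuation_mono[OF val, of S "S \<union> {a}"] by auto
  have \<gamma>: "\<alpha> < \<gamma>" "\<gamma> < \<beta>" using neg unfolding \<alpha>_def \<beta>_def \<gamma>_def by auto
  have H0: "0 \<le> H" using valuation_nonneg[OF val, of UNIV] by (simp add: H_def)
  text \<open>At prices \<open>p\<close> the bundle \<open>S \<union> {a,b}\<close> is demanded; raising the price of \<open>b\<close> to \<open>H\<close>
    forces the demand down to \<open>S \<union> {a}\<close>, whose surplus \<open>\<alpha> - \<gamma>\<close> is negative.\<close>
  define p where "p = (\<lambda>j. if j \<in> S then 0 else if j = a then \<gamma> else if j = b then 0 else H)"
  define q where "q = p(b := H)"
  have pq: "\<forall>j. 0 \<le> p j \<and> p j \<le> q j" using \<alpha>0 \<gamma> H0 ab unfolding p_def q_def by auto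
  have p0: "\<forall>j. 0 \<le> p j" and q0: "\<forall>j. 0 \<le> q j" using pq by (meson order.trans)+
  have over_p: "\<forall>l. l \<notin> S \<union> {a,b} \<longrightarrow> v UNIV < p l" and over_q: "\<forall>l. l \<notin> S \<union> {a} \<longrightarrow> v UNIV < q l"
    by (auto simp: p_def q_def H_def)
  have p_sum: "(\<Sum>j\<in>y. p j) = (if a \<in> y then \<gamma> else 0)" if "y \<subseteq> S \<union> {a,b}" for y
  proof -
    have "(\<Sum>j\<in>y. p j) = (\<Sum>j\<in>y. if j = a then \<gamma> else 0)"
      by (rule sum.cong) (use that aS in \<open>auto simp: p_def\<close>)
    then show ?thesis by (simp add: sum.delta)
  qed
  have "S \<union> {a,b} \<in> demand v p"
    unfolding demand_def
  proof (safe)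
    fix y
    show "v y - (\<Sum>j\<in>y. p j) \<le> v (S \<union> {a,b}) - (\<Sum>j\<in>S \<union> {a,b}. p j)"
    proof (cases "y \<subseteq> S \<union> {a,b}")
      case False
      then obtain j where "j \<in> y" "j \<notin> S \<union> {a,b}" by auto
      then have "v y - (\<Sum>l\<in>y. p l) < 0" using surplus_neg_if_overpriced[OF val p0] over_p by blast
      then show ?thesis
        using p_sum[of "S \<union> {a,b}"] \<gamma> valuation_nonneg[OF val, of "S \<union> {b}"] unfolding \<beta>_def by simp
    next
      case True
      show ?thesis
      proof (cases "a \<in> y")
        case True
        then show ?thesis using p_sum \<open>y \<subseteq> _\<close> valuation_mono[OF val \<open>y \<subseteq> _\<close>] by simp
      next
        case False
        then have "v y \<le> v (S \<union> {b})" using True by (intro valuation_mono[OF val]) auto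
        then show ?thesis using p_sum[OF True] p_sum[of "S \<union> {a,b}"] False \<gamma> unfolding \<beta>_def by simp
      qed
    qed
  qed
  then obtain y where yd: "y \<in> demand v q" and kept: "\<forall>j. p j = q j \<longrightarrow> j \<in> S \<union> {a,b} \<longrightarrow> j \<in> y"
    using gs pq unfolding GS_def by blast
  have "y \<subseteq> S \<union> {a}" by (rule demand_subset_if_overpriced[OF val q0 over_q yd])
  moreover have "S \<union> {a} \<subseteq> y"
  proof
    fix j assume j: "j \<in> S \<union> {a}"
    then have "p j = q j" using ab bS unfolding q_def by auto
    then show "j \<in> y" using kept j by blast
  qed
  ultimately have y: "y = S \<union> {a}" by blast
  have "v S - (\<Sum>j\<in>S. q j) \<le> v y - (\<Sum>j\<in>y. q j)" using yd unfolding demand_def by blast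
  moreover have "(\<Sum>j\<in>S. q j) = 0" by (rule sum.neutral) (use bS in \<open>auto simp: q_def p_def\<close>)
  moreover have "(\<Sum>j\<in>S \<union> {a}. q j) = (\<Sum>j\<in>S \<union> {a}. p j)"
    by (rule sum.cong) (use ab bS in \<open>auto simp: q_def\<close>)
  moreover have "(\<Sum>j\<in>S \<union> {a}. p j) = \<gamma>" by (subst p_sum) auto
  ultimately show False using y \<gamma> unfolding \<alpha>_def by simp
qed

lemma GS_marginal_antimono:
  fixes v :: "'i::finite set \<Rightarrow> real"
  assumes gs: "GS v" and AB: "A \<subseteq> B" and aB: "a \<notin> B"
  shows "v (B \<union> {a}) - v B \<le> v (A \<union> {a}) - v A"
proof -
  have "v (A \<union> F \<union> {a}) - v (A \<union> F) \<le> v (A \<union> {a}) - v A" if "finite F" "a \<notin> A \<union> F" for F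
    using that
  proof (induction F rule: finite_induct)
    case empty
    then show ?case by simp
  next
    case (insert x F)
    show ?case
    proof (cases "x \<in> A \<union> F")
      case True
      then have "A \<union> insert x F = A \<union> F" by auto
      then show ?thesis using insert by simp
    next
      case False
      have "v ((A \<union> F) \<union> {a,x}) - v ((A \<union> F) \<union> {x}) \<le> v ((A \<union> F) \<union> {a}) - v (A \<union> F)"
        by (rule GS_marginal_pair[OF gs]) (use insert False in auto)
      moreover have "(A \<union> F) \<union> {a,x} = A \<union> insert x F \<union> {a}" "(A \<union> F) \<union> {x} = A \<union> insert x F"
        by auto
      ultimately show ?thesis using insert by simp
    qed
  qed
  from this[of "B - A"] AB aB show ?thesis
    by (metis Diff_partition Un_Diff_cancel finite)
qed

lemma GS_marginal_subadditive:
  fixes v :: "'i::finite set \<Rightarrow> real"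
  assumes gs: "GS v" and disj: "C \<inter> T = {}"
  shows "v (C \<union> T) - v C \<le> (\<Sum>j\<in>T. v (C \<union> {j}) - v C)"
  using finite[of T] disj
proof (induction T rule: finite_induct)
  case empty
  then show ?case by simp
next
  case (insert x T)
  have "v (C \<union> T \<union> {x}) - v (C \<union> T) \<le> v (C \<union> {x}) - v C"
    by (rule GS_marginal_antimono[OF gs]) (use insert in auto)
  moreover have "C \<union> insert x T = C \<union> T \<union> {x}" by auto
  ultimately show ?case using insert by simp
qed

section \<open>Truncating a gross substitutes valuation\<close>

lemma demand_truncated_intersect:
  fixes v :: "'i::finite set \<Rightarrow> real"
  assumes val: "valuation v" and p0: "\<forall>j. 0 \<le> p j" and H: "v UNIV < H"
    and x: "x \<in> demand (\<lambda>S. v (S \<inter> A)) p"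
  shows "x \<inter> A \<in> demand v (\<lambda>j. if j \<in> A then p j else H)"
  unfolding demand_def
proof safe
  fix y
  let ?pH = "\<lambda>j. if j \<in> A then p j else H"
  have sum_pH: "(\<Sum>j\<in>y. ?pH j) = (\<Sum>j\<in>y. p j)" if "y \<subseteq> A" for y
    by (rule sum.cong) (use that in auto)
  have x_opt: "v (y \<inter> A) - (\<Sum>j\<in>y. p j) \<le> v (x \<inter> A) - (\<Sum>j\<in>x. p j)" for y
    using x unfolding demand_def by blast
  have "(\<Sum>j\<in>x \<inter> A. p j) \<le> (\<Sum>j\<in>x. p j)" by (rule sum_mono2) (use p0 in auto)
  then have x_surplus: "v (y \<inter> A) - (\<Sum>j\<in>y. p j) \<le> v (x \<inter> A) - (\<Sum>j\<in>x \<inter> A. ?pH j)" for y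
    using x_opt[of y] sum_pH[of "x \<inter> A"] by simp
  show "v y - (\<Sum>j\<in>y. ?pH j) \<le> v (x \<inter> A) - (\<Sum>j\<in>x \<inter> A. ?pH j)"
  proof (cases "y \<subseteq> A")
    case True
    then show ?thesis using x_surplus[of y] sum_pH[OF True] by (simp add: Int_absorb2)
  next
    case False
    then obtain j where "j \<in> y" "j \<notin> A" by auto
    then have "v y - (\<Sum>j\<in>y. ?pH j) < 0"
      by (intro surplus_neg_if_overpriced[OF val]) (use p0 H valuation_nonneg[OF val, of UNIV] in auto)
    then show ?thesis using x_surplus[of "{}"] valuation_empty[OF val] by simp
  qed
qed

lemma demand_truncated_extend:
  fixes v :: "'i::finite set \<Rightarrow> real"
  assumes val: "valuation v" and q0: "\<forall>j. 0 \<le> q j" and H: "v UNIV < H"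
    and y: "y \<in> demand v (\<lambda>j. if j \<in> A then q j else H)"
  shows "y \<union> {j. j \<notin> A \<and> q j = 0} \<in> demand (\<lambda>S. v (S \<inter> A)) q"
proof -
  let ?qH = "\<lambda>j. if j \<in> A then q j else H"
  let ?y' = "y \<union> {j. j \<notin> A \<and> q j = 0}"
  have yA: "y \<subseteq> A"
    by (rule demand_subset_if_overpriced[OF val _ _ y]) (use q0 H valuation_nonneg[OF val, of UNIV] in auto)
  have sum_qH: "(\<Sum>j\<in>z. ?qH j) = (\<Sum>j\<in>z. q j)" if "z \<subseteq> A" for z
    by (rule sum.cong) (use that in auto)
  have "(\<Sum>j\<in>?y'. q j) = (\<Sum>j\<in>y. q j) + (\<Sum>j\<in>{j. j \<notin> A \<and> q j = 0}. q j)"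
    by (rule sum.union_disjoint) (use yA in auto)
  then have sum_y': "(\<Sum>j\<in>?y'. q j) = (\<Sum>j\<in>y. q j)" by simp
  have y'A: "?y' \<inter> A = y" using yA by auto
  show ?thesis
    unfolding demand_def
  proof safe
    fix z
    have "(\<Sum>j\<in>z \<inter> A. q j) \<le> (\<Sum>j\<in>z. q j)" by (rule sum_mono2) (use q0 in auto)
    moreover have "v (z \<inter> A) - (\<Sum>j\<in>z \<inter> A. ?qH j) \<le> v y - (\<Sum>j\<in>y. ?qH j)"
      using y unfolding demand_def by blast
    ultimately show "v (z \<inter> A) - (\<Sum>j\<in>z. q j) \<le> v (?y' \<inter> A) - (\<Sum>j\<in>?y'. q j)"
      using sum_qH[of "z \<inter> A"] sum_qH[OF yA] y'A sum_y' by simp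
  qed
qed

lemma demand_truncated_outside_free:
  fixes v :: "'i::finite set \<Rightarrow> real"
  assumes p0: "\<forall>j. 0 \<le> p j" and x: "x \<in> demand (\<lambda>S. v (S \<inter> A)) p" and j: "j \<in> x" "j \<notin> A"
  shows "p j = 0"
proof -
  have "(\<Sum>l\<in>x. p l) = p j + (\<Sum>l\<in>x - {j}. p l)" using j by (simp add: sum.remove)
  moreover have "(x - {j}) \<inter> A = x \<inter> A" using j by auto
  moreover have "v ((x - {j}) \<inter> A) - (\<Sum>l\<in>x - {j}. p l) \<le> v (x \<inter> A) - (\<Sum>l\<in>x. p l)"
    using x unfolding demand_def by blast
  ultimately show ?thesis using p0 by (simp add: order_antisym)
qed

lemma GS_truncate:
  fixes v :: "'i::finite set \<Rightarrow> real"
  assumes gs: "GS v"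
  shows "GS (\<lambda>S. v (S \<inter> A))"
  unfolding GS_def
proof (intro conjI allI impI ballI)
  have val: "valuation v" using gs by (rule GS_valuation)
  then show "valuation (\<lambda>S. v (S \<inter> A))" unfolding valuation_def by (auto intro: Int_mono)
  fix p q :: "'i \<Rightarrow> real" and x
  assume pq: "\<forall>j. 0 \<le> p j \<and> p j \<le> q j" and x: "x \<in> demand (\<lambda>S. v (S \<inter> A)) p"
  have p0: "\<forall>j. 0 \<le> p j" and q0: "\<forall>j. 0 \<le> q j" using pq by (meson order.trans)+
  define H where "H = v UNIV + 1"
  have H: "v UNIV < H" by (simp add: H_def)
  have H0: "0 \<le> H" using valuation_nonneg[OF val, of UNIV] H by linarith
  text \<open>Items outside \<open>A\<close> are priced out of the untruncated market.\<close>
  define pH where "pH j = (if j \<in> A then p j else H)" for j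
  define qH where "qH j = (if j \<in> A then q j else H)" for j
  have "\<forall>j. 0 \<le> pH j \<and> pH j \<le> qH j" using pq H0 by (simp add: pH_def qH_def)
  moreover have "x \<inter> A \<in> demand v pH"
    unfolding pH_def by (rule demand_truncated_intersect[OF val p0 H x])
  ultimately obtain y where y: "y \<in> demand v qH" and kept: "\<forall>j. pH j = qH j \<longrightarrow> j \<in> x \<inter> A \<longrightarrow> j \<in> y"
    using gs unfolding GS_def by blast
  show "\<exists>y\<in>demand (\<lambda>S. v (S \<inter> A)) q. \<forall>j. p j = q j \<longrightarrow> j \<in> x \<longrightarrow> j \<in> y"
  proof (intro bexI allI impI)
    show "y \<union> {j. j \<notin> A \<and> q j = 0} \<in> demand (\<lambda>S. v (S \<inter> A)) q"
      by (rule demand_truncated_extend[OF val q0 H y[unfolded qH_def]])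
    fix j assume "p j = q j" "j \<in> x"
    then show "j \<in> y \<union> {j. j \<notin> A \<and> q j = 0}"
      using kept demand_truncated_outside_free[OF p0 x] by (cases "j \<in> A") (auto simp: pH_def qH_def)
  qed
qed

section \<open>An ascending auction reaching an approximate Walrasian equilibrium\<close>

text \<open>\<open>S k\<close> is what bidder \<open>k\<close> currently holds and \<open>c l\<close> the number of increments \<open>\<epsilon>\<close> item \<open>l\<close>
  has received; a bidder must top the current price of items he does not hold.\<close>

definition auction_price :: "real \<Rightarrow> ('a \<Rightarrow> 'i set) \<Rightarrow> ('i \<Rightarrow> nat) \<Rightarrow> 'a \<Rightarrow> 'i \<Rightarrow> real" where
  "auction_price \<epsilon> S c k l = \<epsilon> * real (c l) + (if l \<in> S k then 0 else \<epsilon>)"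

definition auction_state ::
  "('a \<Rightarrow> 'i::finite set \<Rightarrow> real) \<Rightarrow> real \<Rightarrow> nat \<Rightarrow> ('a \<Rightarrow> 'i set) \<Rightarrow> ('i \<Rightarrow> nat) \<Rightarrow> bool" where
  "auction_state b \<epsilon> N S c \<longleftrightarrow>
     (\<forall>k k' l. k \<noteq> k' \<longrightarrow> l \<in> S k \<longrightarrow> l \<notin> S k') \<and> (\<forall>l. (\<forall>k. l \<notin> S k) \<longrightarrow> c l = 0) \<and>
     (\<forall>l. c l \<le> N) \<and> (\<forall>k. \<exists>D\<in>demand (b k) (auction_price \<epsilon> S c k). S k \<subseteq> D)"

context
  fixes b :: "'a \<Rightarrow> 'i::finite set \<Rightarrow> real" and \<epsilon> :: real and N :: nat
  assumes GS_bids: "\<forall>k. GS (b k)" and eps_pos: "0 < \<epsilon>" and bids_le: "\<forall>k. b k UNIV \<le> \<epsilon> * real N"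
begin

lemma auction_demand_price_bound:
  assumes D: "D \<in> demand (b k) (auction_price \<epsilon> S c k)" and l: "l \<in> D - S k"
  shows "c l + 1 \<le> N"
proof -
  let ?p = "auction_price \<epsilon> S c k"
  have val: "valuation (b k)" using GS_bids GS_valuation by blast
  have "b k (D - {l}) - (\<Sum>j\<in>D - {l}. ?p j) \<le> b k D - (\<Sum>j\<in>D. ?p j)"
    using D unfolding demand_def by blast
  moreover have "(\<Sum>j\<in>D. ?p j) = ?p l + (\<Sum>j\<in>D - {l}. ?p j)" using l by (simp add: sum.remove)
  moreover have "0 \<le> b k (D - {l})" "b k D \<le> b k UNIV"
    using valuation_nonneg[OF val] valuation_mono[OF val] by auto
  moreover have "?p l = \<epsilon> * real (c l + 1)" using l by (simp add: auction_price_def algebra_simps)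
  ultimately have "\<epsilon> * real (c l + 1) \<le> \<epsilon> * real N" using bids_le[rule_format, of k] by linarith
  then show ?thesis using eps_pos by (simp del: of_nat_add)
qed

text \<open>A bidder \<open>k\<close> who wants more than he holds takes his whole demanded bundle \<open>D\<close>, and the
  price counters of the newly acquired items go up by one. Prices only rise for the other
  bidders, so by gross substitutability each of them still demands a bundle containing what
  he keeps.\<close>

lemma auction_step:
  assumes st: "auction_state b \<epsilon> N S c" and unhappy: "S k \<notin> demand (b k) (auction_price \<epsilon> S c k)"
  obtains S' c' where "auction_state b \<epsilon> N S' c'" "(\<Sum>l\<in>UNIV. c l) < (\<Sum>l\<in>UNIV. c' l)"
proof -
  have disj: "\<And>k k' l. k \<noteq> k' \<Longrightarrow> l \<in> S k \<Longrightarrow> l \<notin> S k'"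
    and unsold: "\<And>l. \<forall>k. l \<notin> S k \<Longrightarrow> c l = 0" and cN: "\<And>l. c l \<le> N"
    and dem: "\<And>k. \<exists>D\<in>demand (b k) (auction_price \<epsilon> S c k). S k \<subseteq> D"
    using st unfolding auction_state_def by blast+
  obtain D where D: "D \<in> demand (b k) (auction_price \<epsilon> S c k)" and SD: "S k \<subseteq> D"
    using dem by blast
  have DS: "D \<noteq> S k" using D unhappy by blast
  define S' where "S' = (\<lambda>l. if l = k then D else S l - D)"
  define c' where "c' = (\<lambda>j. c j + (if j \<in> D - S k then 1 else 0::nat))"
  have price_k: "auction_price \<epsilon> S' c' k = auction_price \<epsilon> S c k"
    using SD by (auto simp: auction_price_def S'_def c'_def fun_eq_iff algebra_simps)
  have price_rise: "\<forall>j. 0 \<le> auction_price \<epsilon> S c l j \<and> auction_price \<epsilon> S c l j \<le> auction_price \<epsilon> S' c' l j"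
    if "l \<noteq> k" for l
    using eps_pos that disj[of l k] by (auto simp: auction_price_def S'_def c'_def algebra_simps)
  have price_kept: "auction_price \<epsilon> S c l j = auction_price \<epsilon> S' c' l j" if "l \<noteq> k" "j \<in> S' l" for l j
    using that by (auto simp: auction_price_def S'_def c'_def)
  have "auction_state b \<epsilon> N S' c'"
    unfolding auction_state_def
  proof (intro conjI allI impI)
    fix k1 k2 l assume "k1 \<noteq> k2" "l \<in> S' k1"
    then show "l \<notin> S' k2" using disj[of k1 k2 l] by (auto simp: S'_def split: if_splits)
  next
    fix l assume "\<forall>k. l \<notin> S' k"
    then have "\<forall>k. l \<notin> S k" "l \<notin> D" using SD by (auto simp: S'_def split: if_splits)
    then show "c' l = 0" using unsold by (simp add: c'_def)
  next
    fix l
    show "c' l \<le> N" using cN[of l] auction_demand_price_bound[OF D, of l] by (auto simp: c'_def)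
  next
    fix l
    show "\<exists>D'\<in>demand (b l) (auction_price \<epsilon> S' c' l). S' l \<subseteq> D'"
    proof (cases "l = k")
      case True
      then show ?thesis using D price_k by (auto simp: S'_def)
    next
      case False
      obtain Dl where Dl: "Dl \<in> demand (b l) (auction_price \<epsilon> S c l)" "S l \<subseteq> Dl" using dem by blast
      obtain y where y: "y \<in> demand (b l) (auction_price \<epsilon> S' c' l)"
        and kept: "\<forall>j. auction_price \<epsilon> S c l j = auction_price \<epsilon> S' c' l j \<longrightarrow> j \<in> Dl \<longrightarrow> j \<in> y"
        using GS_bids price_rise[OF False] Dl(1) unfolding GS_def by blast
      have "S' l \<subseteq> y" using kept price_kept[OF False] Dl(2) False by (auto simp: S'_def)
      then show ?thesis using y by blast
    qed
  qed
  moreover have "(\<Sum>l\<in>UNIV. c' l) = (\<Sum>l\<in>UNIV. c l) + card (D - S k)"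
    unfolding c'_def by (simp add: sum.distrib sum.If_cases set_diff_eq)
  moreover have "card (D - S k) > 0" using SD DS by (auto simp: card_gt_0_iff)
  ultimately show thesis using that by simp
qed

lemma auction_terminates:
  assumes "auction_state b \<epsilon> N S c"
  shows "\<exists>S' c'. auction_state b \<epsilon> N S' c' \<and> (\<forall>k. S' k \<in> demand (b k) (auction_price \<epsilon> S' c' k))"
  using assms
proof (induction "card (UNIV :: 'i set) * N - sum c UNIV" arbitrary: S c rule: less_induct)
  case less
  show ?case
  proof (cases "\<forall>k. S k \<in> demand (b k) (auction_price \<epsilon> S c k)")
    case True
    then show ?thesis using less.prems by blast
  next
    case False
    then obtain k where "S k \<notin> demand (b k) (auction_price \<epsilon> S c k)" by blast
    then obtain S' c' where st': "auction_state b \<epsilon> N S' c'" and lt: "sum c UNIV < sum c' UNIV"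
      using auction_step[OF less.prems] by blast
    have "sum c' UNIV \<le> card (UNIV :: 'i set) * N"
      using st' sum_bounded_above[of UNIV c' N] unfolding auction_state_def by (simp add: mult.commute)
    then have "card (UNIV :: 'i set) * N - sum c' UNIV < card (UNIV :: 'i set) * N - sum c UNIV" using lt by linarith
    then show ?thesis using less.hyps st' by blast
  qed
qed

end

definition approx_walrasian ::
  "('a::finite \<Rightarrow> 'i::finite set \<Rightarrow> real) \<Rightarrow> real \<Rightarrow> ('a \<Rightarrow> 'i set) \<Rightarrow> ('i \<Rightarrow> real) \<Rightarrow> bool" where
  "approx_walrasian b \<epsilon> S q \<longleftrightarrow>
     (\<forall>l. card {k. l \<in> S k} \<le> 1) \<and> (\<forall>l. 0 \<le> q l) \<and> (\<forall>l. (\<forall>k. l \<notin> S k) \<longrightarrow> q l = 0) \<and>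
     (\<forall>k T. b k T - (\<Sum>l\<in>T. q l) \<le> b k (S k) - (\<Sum>l\<in>S k. q l) + \<epsilon> * real (card T))"

lemma approx_walrasian_exists:
  fixes b :: "'a::finite \<Rightarrow> 'i::finite set \<Rightarrow> real"
  assumes gs: "\<forall>k. GS (b k)" and eps: "0 < \<epsilon>"
  obtains S q where "approx_walrasian b \<epsilon> S q"
proof -
  define N where "N = nat \<lceil>(\<Sum>k\<in>UNIV. b k UNIV) / \<epsilon>\<rceil>"
  have "b k UNIV \<le> (\<Sum>k\<in>UNIV. b k UNIV)" for k
    by (rule member_le_sum) (use gs GS_valuation valuation_nonneg in auto)
  moreover have "(\<Sum>k\<in>UNIV. b k UNIV) / \<epsilon> \<le> real N" unfolding N_def by linarith
  then have "(\<Sum>k\<in>UNIV. b k UNIV) \<le> \<epsilon> * real N" using eps by (simp add: field_simps)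
  ultimately have bids_le: "\<forall>k. b k UNIV \<le> \<epsilon> * real N" by (meson order.trans)
  have "auction_state b \<epsilon> N (\<lambda>_. {}) (\<lambda>_. 0)"
    unfolding auction_state_def using demand_nonempty by auto
  then obtain S c where st: "auction_state b \<epsilon> N S c"
    and final: "\<forall>k. S k \<in> demand (b k) (auction_price \<epsilon> S c k)"
    using auction_terminates[OF gs eps bids_le] by blast
  define q where "q l = \<epsilon> * real (c l)" for l
  have "approx_walrasian b \<epsilon> S q"
    unfolding approx_walrasian_def
  proof (intro conjI allI impI)
    fix l
    show "card {k. l \<in> S k} \<le> 1"
      using st card_le_Suc0_iff_eq[of "{k. l \<in> S k}"] unfolding auction_state_def by auto
    show "0 \<le> q l" using eps by (simp add: q_def)
    show "\<forall>k. l \<notin> S k \<Longrightarrow> q l = 0" using st unfolding auction_state_def q_def by simp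
  next
    fix k T
    let ?p = "auction_price \<epsilon> S c k"
    have "b k T - (\<Sum>l\<in>T. ?p l) \<le> b k (S k) - (\<Sum>l\<in>S k. ?p l)"
      using final unfolding demand_def by blast
    moreover have "(\<Sum>l\<in>S k. ?p l) = (\<Sum>l\<in>S k. q l)"
      by (rule sum.cong) (auto simp: auction_price_def q_def)
    moreover have "(\<Sum>l\<in>T. ?p l) \<le> (\<Sum>l\<in>T. q l + \<epsilon>)"
      by (rule sum_mono) (use eps in \<open>auto simp: auction_price_def q_def\<close>)
    ultimately show "b k T - (\<Sum>l\<in>T. q l) \<le> b k (S k) - (\<Sum>l\<in>S k. q l) + \<epsilon> * real (card T)"
      by (simp add: sum.distrib mult.commute)
  qed
  then show thesis by (rule that)
qed

section \<open>The welfare function \<open>W\<close> and optimal partitions\<close>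

lemma sum_UNIV_fun_upd:
  fixes f :: "'a::finite \<Rightarrow> 'b \<Rightarrow> real"
  shows "(\<Sum>k\<in>UNIV. f k ((Y(l := x)) k)) = (\<Sum>k\<in>UNIV. f k (Y k)) + (f l x - f l (Y l))"
proof -
  have "(\<Sum>k\<in>UNIV. f k ((Y(l := x)) k)) = f l x + (\<Sum>k\<in>UNIV - {l}. f k ((Y(l := x)) k))"
    using sum.remove[of UNIV l "\<lambda>k. f k ((Y(l := x)) k)"] by simp
  also have "(\<Sum>k\<in>UNIV - {l}. f k ((Y(l := x)) k)) = (\<Sum>k\<in>UNIV - {l}. f k (Y k))"
    by (rule sum.cong) auto
  finally show ?thesis using sum.remove[of UNIV l "\<lambda>k. f k (Y k)"] by simp
qed

lemma sum_bundles_multiplicity: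
  fixes U :: "'a::finite \<Rightarrow> 'i::finite set" and f :: "'i \<Rightarrow> real"
  shows "(\<Sum>k\<in>UNIV. \<Sum>l\<in>U k. f l) = (\<Sum>l\<in>UNIV. f l * real (card {k. l \<in> U k}))"
proof -
  have "(\<Sum>k\<in>UNIV. \<Sum>l\<in>U k. f l) = (\<Sum>k\<in>UNIV. \<Sum>l\<in>UNIV. if l \<in> U k then f l else 0)"
    by (rule sum.cong) (auto simp: sum.If_cases Int_absorb1)
  also have "\<dots> = (\<Sum>l\<in>UNIV. \<Sum>k\<in>UNIV. if l \<in> U k then f l else 0)" by (rule sum.swap)
  also have "\<dots> = (\<Sum>l\<in>UNIV. f l * real (card {k. l \<in> U k}))"
    by (rule sum.cong) (auto simp: sum.If_cases Collect_conv_if mult.commute)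
  finally show ?thesis .
qed

lemma partition_multiplicity: "is_partition Y \<Longrightarrow> card {i. j \<in> Y i} = 1"
proof -
  assume Y: "is_partition Y"
  then obtain i where "j \<in> Y i" unfolding is_partition_def by blast
  with Y have "{i. j \<in> Y i} = {i}" unfolding is_partition_def by blast
  then show ?thesis by simp
qed

lemma partition_unique: "is_partition Y \<Longrightarrow> j \<in> Y k \<Longrightarrow> j \<in> Y l \<Longrightarrow> k = l"
  unfolding is_partition_def by blast

lemma partition_covers: "is_partition Y \<Longrightarrow> \<exists>l. j \<in> Y l"
  unfolding is_partition_def by blast

lemma welfare_le_W:
  fixes b :: "'a::finite \<Rightarrow> 'i::finite set \<Rightarrow> real"
  assumes "\<forall>j. card {i. j \<in> S i} \<le> x j"
  shows "(\<Sum>i\<in>UNIV. b i (S i)) \<le> W b x"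
  unfolding W_def by (rule Max_ge) (use assms in auto)

lemma W_attained:
  fixes b :: "'a::finite \<Rightarrow> 'i::finite set \<Rightarrow> real"
  obtains S where "\<forall>j. card {i. j \<in> S i} \<le> x j" "W b x = (\<Sum>i\<in>UNIV. b i (S i))"
proof -
  let ?F = "{S :: 'a \<Rightarrow> 'i set. \<forall>j. card {i. j \<in> S i} \<le> x j}"
  have "(\<lambda>_. {}) \<in> ?F" by simp
  then have "?F \<noteq> {}" by (metis empty_iff)
  then have "Max ((\<lambda>S. \<Sum>i\<in>UNIV. b i (S i)) ` ?F) \<in> (\<lambda>S. \<Sum>i\<in>UNIV. b i (S i)) ` ?F"
    by (intro Max_in) simp_all
  then show thesis using that unfolding W_def by auto
qed

lemma packing_extends_to_partition:
  fixes b :: "'a::finite \<Rightarrow> 'i::finite set \<Rightarrow> real"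
  assumes val: "\<forall>k. valuation (b k)" and U: "\<forall>l. card {i. l \<in> U i} \<le> 1"
  obtains U' where "is_partition U'" "(\<Sum>i\<in>UNIV. b i (U i)) \<le> (\<Sum>i\<in>UNIV. b i (U' i))"
proof
  fix i0 :: 'a
  let ?U' = "U(i0 := U i0 \<union> - (\<Union>k. U k))"
  have unique: "k = k'" if "l \<in> U k" "l \<in> U k'" for l k k'
    using U[rule_format, of l] that card_le_Suc0_iff_eq[of "{i. l \<in> U i}"] by auto
  show "is_partition ?U'"
    unfolding is_partition_def
  proof (intro conjI allI impI)
    fix k k' :: 'a assume "k \<noteq> k'"
    then show "?U' k \<inter> ?U' k' = {}" using unique by auto
  next
    show "(\<Union>k. ?U' k) = UNIV"
    proof safe
      fix x
      show "x \<in> (\<Union>k. ?U' k)" by (cases "x \<in> (\<Union>k. U k)") auto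
    qed auto
  qed
  show "(\<Sum>i\<in>UNIV. b i (U i)) \<le> (\<Sum>i\<in>UNIV. b i (?U' i))"
    by (rule sum_mono) (use val in \<open>auto intro: valuation_mono\<close>)
qed

lemma W_one_optimal:
  fixes b :: "'a::finite \<Rightarrow> 'i::finite set \<Rightarrow> real"
  assumes val: "\<forall>k. valuation (b k)" and opt: "optimal_partition b Y"
  shows "W b (\<lambda>_. 1) = (\<Sum>i\<in>UNIV. b i (Y i))"
proof (rule antisym)
  obtain U where U: "\<forall>j. card {i. j \<in> U i} \<le> 1" "W b (\<lambda>_. 1) = (\<Sum>i\<in>UNIV. b i (U i))"
    by (rule W_attained)
  obtain U' where "is_partition U'" "(\<Sum>i\<in>UNIV. b i (U i)) \<le> (\<Sum>i\<in>UNIV. b i (U' i))"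
    using packing_extends_to_partition[OF val U(1)] by blast
  then show "W b (\<lambda>_. 1) \<le> (\<Sum>i\<in>UNIV. b i (Y i))"
    using opt U(2) unfolding optimal_partition_def by force
  have "is_partition Y" using opt unfolding optimal_partition_def by blast
  then show "(\<Sum>i\<in>UNIV. b i (Y i)) \<le> W b (\<lambda>_. 1)"
    by (intro welfare_le_W) (simp add: partition_multiplicity)
qed

lemma optimal_partition_exists:
  fixes v :: "'a::finite \<Rightarrow> 'i::finite set \<Rightarrow> real"
  obtains A where "optimal_partition v A"
proof -
  let ?P = "{Y :: 'a \<Rightarrow> 'i set. is_partition Y}"
  fix i0 :: 'a
  have "(\<lambda>i. if i = i0 then UNIV else {}) \<in> ?P" unfolding is_partition_def by auto
  then have "?P \<noteq> {}" by (metis empty_iff)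
  then obtain A where "A \<in> ?P" "\<And>Y. Y \<in> ?P \<Longrightarrow> (\<Sum>i\<in>UNIV. v i (Y i)) \<le> (\<Sum>i\<in>UNIV. v i (A i))"
    using finite_has_maximizer[OF finite \<open>?P \<noteq> {}\<close>, of "\<lambda>Y. \<Sum>i\<in>UNIV. v i (Y i)"] by blast
  then show thesis using that unfolding optimal_partition_def by blast
qed

lemma min_price_nonneg:
  fixes b :: "'a::finite \<Rightarrow> 'i::finite set \<Rightarrow> real"
  shows "0 \<le> min_price b j"
proof -
  obtain T where T: "\<forall>l. card {k. l \<in> T k} \<le> 1" "W b (\<lambda>_. 1) = (\<Sum>k\<in>UNIV. b k (T k))"
    by (rule W_attained)
  have "(\<Sum>k\<in>UNIV. b k (T k)) \<le> W b (\<lambda>l. 1 + (if l = j then 1 else 0))"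
    by (rule welfare_le_W) (use T(1) in \<open>auto intro: le_trans\<close>)
  then show ?thesis using T(2) unfolding min_price_def by simp
qed

text \<open>Handing a second copy of \<open>j\<close> to agent \<open>k\<close> is feasible in the market defining \<open>min_price b j\<close>.\<close>

lemma marginal_le_min_price:
  fixes b :: "'a::finite \<Rightarrow> 'i::finite set \<Rightarrow> real"
  assumes val: "\<forall>k. valuation (b k)" and opt: "optimal_partition b Y"
  shows "b k (Y k \<union> {j}) - b k (Y k) \<le> min_price b j"
proof -
  have Y: "is_partition Y" using opt unfolding optimal_partition_def by blast
  have "\<forall>l. card {k'. l \<in> (Y(k := Y k \<union> {j})) k'} \<le> 1 + (if l = j then 1 else 0)"
  proof
    fix l
    let ?M = "{k'. l \<in> (Y(k := Y k \<union> {j})) k'}" and ?P = "{k'. l \<in> Y k'}"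
    have P: "card ?P = 1" by (rule partition_multiplicity[OF Y])
    show "card ?M \<le> 1 + (if l = j then 1 else 0)"
    proof (cases "l = j")
      case True
      have "card ?M \<le> card (insert k ?P)" by (rule card_mono) auto
      also have "\<dots> \<le> Suc (card ?P)" by (simp add: card_insert_if)
      finally show ?thesis using P True by simp
    next
      case False
      have "card ?M \<le> card ?P" by (rule card_mono) (use False in auto)
      then show ?thesis using P False by simp
    qed
  qed
  then have "(\<Sum>k'\<in>UNIV. b k' ((Y(k := Y k \<union> {j})) k')) \<le> W b (\<lambda>l. 1 + (if l = j then 1 else 0))"
    by (rule welfare_le_W)
  then show ?thesis
    using W_one_optimal[OF val opt] unfolding min_price_def sum_UNIV_fun_upd by simp
qed

lemma optimal_partition_move:
  fixes b :: "'a::finite \<Rightarrow> 'i::finite set \<Rightarrow> real"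
  assumes opt: "optimal_partition b Y" and j: "j \<in> Y l" and lk: "l \<noteq> k"
  shows "b k (Y k \<union> {j}) + b l (Y l - {j}) \<le> b k (Y k) + b l (Y l)"
proof -
  have Y: "is_partition Y" using opt unfolding optimal_partition_def by blast
  let ?U = "Y(l := Y l - {j}, k := Y k \<union> {j})"
  have "is_partition ?U"
    unfolding is_partition_def
  proof (intro conjI allI impI)
    fix k1 k2 :: 'a assume "k1 \<noteq> k2"
    then show "?U k1 \<inter> ?U k2 = {}" using Y j lk unfolding is_partition_def by auto
  next
    show "(\<Union>k'. ?U k') = UNIV"
    proof safe
      fix x
      obtain m where "x \<in> Y m" using partition_covers[OF Y] by blast
      then show "x \<in> (\<Union>k'. ?U k')" by (cases "m = k"; cases "m = l"; cases "x = j") auto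
    qed auto
  qed
  then have "(\<Sum>k'\<in>UNIV. b k' (?U k')) \<le> (\<Sum>k'\<in>UNIV. b k' (Y k'))"
    using opt unfolding optimal_partition_def by blast
  then show ?thesis using lk unfolding sum_UNIV_fun_upd by simp
qed

section \<open>Minimal Walrasian prices are individually rational\<close>

lemma approx_walrasian_price_total:
  assumes "approx_walrasian b \<epsilon> S q"
  shows "(\<Sum>k\<in>UNIV. \<Sum>l\<in>S k. q l) = (\<Sum>l\<in>UNIV. q l)"
proof -
  have "q l * real (card {k. l \<in> S k}) = q l" for l
  proof (cases "card {k. l \<in> S k} = 0")
    case True
    then show ?thesis using assms unfolding approx_walrasian_def by simp
  next
    case False
    then have "card {k. l \<in> S k} = 1" using assms unfolding approx_walrasian_def by (meson le_antisym less_one not_le)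
    then show ?thesis by simp
  qed
  then show ?thesis by (simp only: sum_bundles_multiplicity)
qed

lemma approx_walrasian_welfare_bound:
  fixes b :: "'a::finite \<Rightarrow> 'i::finite set \<Rightarrow> real"
  assumes eq: "approx_walrasian b \<epsilon> S q" and eps: "0 \<le> \<epsilon>" and U: "\<forall>l. card {k. l \<in> U k} \<le> x l"
  shows "(\<Sum>k\<in>UNIV. b k (U k)) \<le> (\<Sum>k\<in>UNIV. b k (S k)) - (\<Sum>l\<in>UNIV. q l)
           + (\<Sum>l\<in>UNIV. q l * real (x l)) + \<epsilon> * real (card (UNIV :: 'a set) * card (UNIV :: 'i set))"
proof -
  have q0: "\<forall>l. 0 \<le> q l" using eq unfolding approx_walrasian_def by blast
  have "b k (U k) \<le> b k (S k) - (\<Sum>l\<in>S k. q l) + (\<Sum>l\<in>U k. q l) + \<epsilon> * real (card (U k))" for k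
    using eq unfolding approx_walrasian_def by (smt (verit))
  then have "(\<Sum>k\<in>UNIV. b k (U k))
      \<le> (\<Sum>k\<in>UNIV. b k (S k) - (\<Sum>l\<in>S k. q l) + (\<Sum>l\<in>U k. q l) + \<epsilon> * real (card (U k)))"
    by (rule sum_mono)
  also have "\<dots> = (\<Sum>k\<in>UNIV. b k (S k)) - (\<Sum>l\<in>UNIV. q l) + (\<Sum>k\<in>UNIV. \<Sum>l\<in>U k. q l)
      + \<epsilon> * (\<Sum>k\<in>UNIV. real (card (U k)))"
    by (simp add: approx_walrasian_price_total[OF eq] sum.distrib sum_subtractf sum_distrib_left)
  also have "(\<Sum>k\<in>UNIV. \<Sum>l\<in>U k. q l) \<le> (\<Sum>l\<in>UNIV. q l * real (x l))"
    unfolding sum_bundles_multiplicity by (rule sum_mono) (use U q0 in \<open>auto intro: mult_left_mono\<close>)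
  also have "(\<Sum>k\<in>UNIV. real (card (U k))) \<le> real (card (UNIV :: 'a set) * card (UNIV :: 'i set))"
    using sum_bounded_above[of UNIV "\<lambda>k. real (card (U k))" "real (card (UNIV :: 'i set))"]
    by (simp add: card_mono)
  finally show ?thesis using eps by (simp add: mult_left_mono)
qed

lemma min_price_le_approx_price:
  fixes b :: "'a::finite \<Rightarrow> 'i::finite set \<Rightarrow> real"
  assumes eq: "approx_walrasian b \<epsilon> S q" and eps: "0 \<le> \<epsilon>"
  shows "min_price b j \<le> q j + \<epsilon> * real (card (UNIV :: 'a set) * card (UNIV :: 'i set))"
proof -
  let ?x = "\<lambda>l. 1 + (if l = j then 1 else 0) :: nat"
  obtain U where U: "\<forall>l. card {k. l \<in> U k} \<le> ?x l" "W b ?x = (\<Sum>k\<in>UNIV. b k (U k))"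
    by (rule W_attained)
  have "(\<Sum>l\<in>UNIV. q l * real (?x l)) = (\<Sum>l\<in>UNIV. q l + (if l = j then q l else 0))"
    by (rule sum.cong) auto
  also have "\<dots> = (\<Sum>l\<in>UNIV. q l) + q j" by (simp add: sum.distrib)
  finally have "W b ?x \<le> (\<Sum>k\<in>UNIV. b k (S k)) + q j + \<epsilon> * real (card (UNIV :: 'a set) * card (UNIV :: 'i set))"
    using approx_walrasian_welfare_bound[OF eq eps U(1)] U(2) by simp
  moreover have "(\<Sum>k\<in>UNIV. b k (S k)) \<le> W b (\<lambda>_. 1)"
    by (rule welfare_le_W) (use eq in \<open>simp add: approx_walrasian_def\<close>)
  ultimately show ?thesis unfolding min_price_def by simp
qed

text \<open>At an optimal partition every agent's surplus at the approximate prices is nonnegative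
  up to the slack: the total surplus there is at least that of the equilibrium packing, while
  every other agent's surplus exceeds his equilibrium surplus by at most \<open>\<epsilon>\<close> per item.\<close>

lemma approx_price_le_value:
  fixes b :: "'a::finite \<Rightarrow> 'i::finite set \<Rightarrow> real"
  assumes val: "\<forall>k. valuation (b k)" and opt: "optimal_partition b Y"
    and eq: "approx_walrasian b \<epsilon> S q" and eps: "0 \<le> \<epsilon>"
  shows "(\<Sum>l\<in>Y i. q l) \<le> b i (Y i) + \<epsilon> * real (card (UNIV :: 'a set) * card (UNIV :: 'i set))"
proof -
  let ?n = "real (card (UNIV :: 'a set))" and ?m = "real (card (UNIV :: 'i set))"
  define g where "g k = b k (Y k) - (\<Sum>l\<in>Y k. q l)" for k
  define h where "h k = b k (S k) - (\<Sum>l\<in>S k. q l)" for k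
  have Y: "is_partition Y" using opt unfolding optimal_partition_def by blast
  have "(\<Sum>k\<in>UNIV. b k (S k)) \<le> W b (\<lambda>_. 1)"
    by (rule welfare_le_W) (use eq in \<open>simp add: approx_walrasian_def\<close>)
  moreover have "(\<Sum>k\<in>UNIV. \<Sum>l\<in>Y k. q l) = (\<Sum>l\<in>UNIV. q l)"
    by (simp add: sum_bundles_multiplicity partition_multiplicity[OF Y])
  ultimately have total: "(\<Sum>k\<in>UNIV. h k) \<le> (\<Sum>k\<in>UNIV. g k)"
    unfolding g_def h_def sum_subtractf W_one_optimal[OF val opt] approx_walrasian_price_total[OF eq]
    by simp
  have other: "g k \<le> h k + \<epsilon> * ?m" for k
  proof -
    have "g k \<le> h k + \<epsilon> * real (card (Y k))" using eq unfolding approx_walrasian_def g_def h_def by force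
    moreover have "\<epsilon> * real (card (Y k)) \<le> \<epsilon> * ?m" using eps by (simp add: card_mono mult_left_mono)
    ultimately show ?thesis by simp
  qed
  have "b i {} - (\<Sum>l\<in>{}. q l) \<le> h i + \<epsilon> * real (card ({} :: 'i set))"
    using eq unfolding approx_walrasian_def h_def by blast
  then have "0 \<le> h i" using valuation_empty[of "b i"] val by simp
  moreover have "(\<Sum>k\<in>UNIV - {i}. g k) \<le> (\<Sum>k\<in>UNIV - {i}. h k + \<epsilon> * ?m)"
    by (rule sum_mono) (rule other)
  moreover have "(\<Sum>k\<in>UNIV - {i}. h k + \<epsilon> * ?m) \<le> (\<Sum>k\<in>UNIV - {i}. h k) + ?n * (\<epsilon> * ?m)"
    using eps by (simp add: sum.distrib card_Diff_singleton mult_right_mono)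
  ultimately have "- (?n * (\<epsilon> * ?m)) \<le> g i"
    using total sum.remove[of UNIV i g] sum.remove[of UNIV i h] by simp
  then show ?thesis unfolding g_def by (simp add: algebra_simps)
qed

lemma min_price_individually_rational:
  fixes b :: "'a::finite \<Rightarrow> 'i::finite set \<Rightarrow> real"
  assumes gs: "\<forall>k. GS (b k)" and opt: "optimal_partition b Y"
  shows "(\<Sum>j\<in>Y i. min_price b j) \<le> b i (Y i)"
proof (rule field_le_epsilon)
  fix e :: real assume e: "0 < e"
  define M where "M = real (card (UNIV :: 'i set))"
  define C where "C = real (card (UNIV :: 'a set) * card (UNIV :: 'i set))"
  define \<epsilon> where "\<epsilon> = e / ((M + 1) * (C + 1))"
  have M0: "0 \<le> M" and C0: "0 \<le> C" by (simp_all add: M_def C_def)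
  have eps: "0 < \<epsilon>" using e M0 C0 by (simp add: \<epsilon>_def)
  obtain S q where eq: "approx_walrasian b \<epsilon> S q" using approx_walrasian_exists[OF gs eps] .
  have val: "\<forall>k. valuation (b k)" using gs GS_valuation by blast
  have "(\<Sum>j\<in>Y i. min_price b j) \<le> (\<Sum>j\<in>Y i. q j + \<epsilon> * C)"
    by (rule sum_mono) (use min_price_le_approx_price[OF eq] eps in \<open>simp add: C_def\<close>)
  also have "\<dots> \<le> (\<Sum>j\<in>Y i. q j) + M * (\<epsilon> * C)"
    using eps C0 by (simp add: M_def sum.distrib card_mono mult_right_mono)
  also have "\<dots> \<le> b i (Y i) + (M + 1) * (\<epsilon> * C)"
    using approx_price_le_value[OF val opt eq] eps by (simp add: C_def algebra_simps)
  also have "(M + 1) * (\<epsilon> * C) = e * (C / (C + 1))"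
    using M0 C0 by (simp add: \<epsilon>_def)
  also have "\<dots> \<le> e" using e C0 by (intro mult_left_le) simp_all
  finally show "(\<Sum>j\<in>Y i. min_price b j) \<le> b i (Y i) + e" by simp
qed

section \<open>Truncated bids\<close>

lemma sum_partition_pieces_le:
  fixes p :: "'i::finite \<Rightarrow> real"
  assumes A: "is_partition A" and p0: "\<forall>l. 0 \<le> p l"
  shows "(\<Sum>k\<in>K. \<Sum>j\<in>A k \<inter> T. p j) \<le> (\<Sum>j\<in>T. p j)"
proof -
  have "(\<Sum>k\<in>K. \<Sum>j\<in>A k \<inter> T. p j) = (\<Sum>j\<in>(\<Union>k\<in>K. A k \<inter> T). p j)"
    by (rule sum.UNION_disjoint[symmetric]) (use A in \<open>auto simp: is_partition_def\<close>)
  also have "\<dots> \<le> (\<Sum>j\<in>T. p j)" by (rule sum_mono2) (use p0 in auto)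
  finally show ?thesis .
qed

lemma truncated_min_price_nonpos:
  fixes v :: "'a::finite \<Rightarrow> 'i::finite set \<Rightarrow> real"
  assumes val: "\<forall>k. valuation (v k)" and A: "is_partition A"
  shows "min_price (\<lambda>k S. v k (S \<inter> A k)) j \<le> 0"
proof -
  let ?b = "\<lambda>k S. v k (S \<inter> A k)"
  obtain T where T: "W ?b (\<lambda>l. 1 + (if l = j then 1 else 0)) = (\<Sum>k\<in>UNIV. ?b k (T k))"
    by (rule W_attained)
  have "(\<Sum>k\<in>UNIV. ?b k (T k)) \<le> (\<Sum>k\<in>UNIV. ?b k (A k))"
    by (rule sum_mono) (use val in \<open>auto intro: valuation_mono\<close>)
  moreover have "(\<Sum>k\<in>UNIV. ?b k (A k)) \<le> W ?b (\<lambda>_. 1)"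
    by (rule welfare_le_W) (simp add: partition_multiplicity[OF A])
  ultimately show ?thesis using T unfolding min_price_def by simp
qed

lemma truncated_optimal_allocation:
  fixes v :: "'a::finite \<Rightarrow> 'i::finite set \<Rightarrow> real"
  assumes val: "\<forall>k. valuation (v k)" and A: "is_partition A"
    and opt: "optimal_partition (\<lambda>k S. v k (S \<inter> A k)) Y"
  shows "v i (A i) \<le> v i (Y i)"
proof -
  have le: "v k (Y k \<inter> A k) \<le> v k (A k)" for k using val by (auto intro: valuation_mono)
  have "(\<Sum>k\<in>UNIV. v k (A k \<inter> A k)) \<le> (\<Sum>k\<in>UNIV. v k (Y k \<inter> A k))"
    using opt A unfolding optimal_partition_def by blast
  then have "(\<Sum>k\<in>UNIV. v k (A k) - v k (Y k \<inter> A k)) \<le> 0" by (simp add: sum_subtractf)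
  moreover have "v i (A i) - v i (Y i \<inter> A i) \<le> (\<Sum>k\<in>UNIV. v k (A k) - v k (Y k \<inter> A k))"
    by (rule member_le_sum) (use le in auto)
  moreover have "v i (Y i \<inter> A i) \<le> v i (Y i)" using val by (auto intro: valuation_mono)
  ultimately show ?thesis by linarith
qed

context
  fixes v :: "'a::finite \<Rightarrow> 'i::finite set \<Rightarrow> real" and A Y :: "'a \<Rightarrow> 'i set"
    and i :: 'a and bi :: "'i set \<Rightarrow> real"
  assumes GS_vals: "\<forall>k. GS (v k)" and A_opt: "optimal_partition v A" and bi_val: "valuation bi"
    and Y_opt: "optimal_partition ((\<lambda>k S. v k (S \<inter> A k))(i := bi)) Y"
begin

text \<open>An item \<open>j \<in> A k\<close> lost by a truncated bidder \<open>k\<close> either went to \<open>i\<close>, and then its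
  marginal value to \<open>k\<close> is bounded by its minimal Walrasian price, or to another truncated
  bidder, who has no value for it, so by optimality of \<open>Y\<close> it has no marginal value to \<open>k\<close>.
  Submodularity adds up these marginal bounds.\<close>

lemma deviation_lost_value:
  assumes ki: "k \<noteq> i"
  shows "v k (A k) - v k (Y k \<inter> A k)
           \<le> (\<Sum>j\<in>A k \<inter> Y i. min_price ((\<lambda>k S. v k (S \<inter> A k))(i := bi)) j)"
proof -
  define b where "b = (\<lambda>k S. v k (S \<inter> A k))(i := bi)"
  define C where "C = Y k \<inter> A k"
  have A: "is_partition A" and Y: "is_partition Y"
    using A_opt Y_opt unfolding optimal_partition_def by blast+
  have Y_opt': "optimal_partition b Y" using Y_opt unfolding b_def .
  have val: "\<forall>k. valuation (b k)"
    using bi_val GS_vals GS_truncate GS_valuation unfolding b_def by auto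
  have b_other: "b l S = v l (S \<inter> A l)" if "l \<noteq> i" for l S using that by (simp add: b_def)
  have gain_k: "b k (Y k \<union> {j}) = v k (C \<union> {j})" if "j \<in> A k" for j
    using that ki by (simp add: b_other C_def Int_Un_distrib2)
  have marginal: "v k (C \<union> {j}) - v k C \<le> (if j \<in> Y i then min_price b j else 0)"
    if j: "j \<in> A k - C" for j
  proof -
    obtain l where jl: "j \<in> Y l" using partition_covers[OF Y] by blast
    have lk: "l \<noteq> k" using j jl unfolding C_def by auto
    show ?thesis
    proof (cases "l = i")
      case True
      then show ?thesis
        using marginal_le_min_price[OF val Y_opt', of k j] gain_k[of j] j jl b_other[OF ki]
        by (simp add: C_def)
    next
      case False
      have "j \<notin> A l" using partition_unique[OF A] j lk by blast
      then have "b l (Y l - {j}) = b l (Y l)" using False by (simp add: b_other Diff_Int_distrib2)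
      then have "v k (C \<union> {j}) \<le> v k C"
        using optimal_partition_move[OF Y_opt' jl lk] gain_k[of j] j b_other[OF ki]
        by (simp add: C_def)
      moreover have "j \<notin> Y i" using partition_unique[OF Y] jl False by blast
      ultimately show ?thesis by simp
    qed
  qed
  have "A k = C \<union> (A k - C)" unfolding C_def by auto
  then have "v k (A k) - v k C \<le> (\<Sum>j\<in>A k - C. v k (C \<union> {j}) - v k C)"
    using GS_marginal_subadditive[OF GS_vals[rule_format, of k], of C "A k - C"] by auto
  also have "\<dots> \<le> (\<Sum>j\<in>A k - C. if j \<in> Y i then min_price b j else 0)"
    by (rule sum_mono) (rule marginal)
  also have "\<dots> = (\<Sum>j\<in>(A k - C) \<inter> Y i. min_price b j)" by (simp add: sum.inter_restrict)
  also have "(A k - C) \<inter> Y i = A k \<inter> Y i"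
    using partition_unique[OF Y] ki unfolding C_def by blast
  finally show ?thesis unfolding b_def C_def .
qed

text \<open>Compare \<open>A\<close> with the partition giving every truncated bidder \<open>k\<close> only \<open>Y k \<inter> A k\<close>
  and agent \<open>i\<close> all the rest.\<close>

lemma deviation_utility_le:
  "v i (Y i) - (\<Sum>j\<in>Y i. min_price ((\<lambda>k S. v k (S \<inter> A k))(i := bi)) j) \<le> v i (A i)"
proof -
  define p where "p = min_price ((\<lambda>k S. v k (S \<inter> A k))(i := bi))"
  define C where "C k = Y k \<inter> A k" for k
  define Z where "Z k = (if k = i then - (\<Union>k'\<in>- {i}. C k') else C k)" for k
  have A: "is_partition A" and Y: "is_partition Y"
    using A_opt Y_opt unfolding optimal_partition_def by blast+
  have val: "\<forall>k. valuation (v k)" using GS_vals GS_valuation by blast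
  have "is_partition Z"
    unfolding is_partition_def
  proof (intro conjI allI impI)
    fix k1 k2 :: 'a assume "k1 \<noteq> k2"
    then show "Z k1 \<inter> Z k2 = {}" using partition_unique[OF Y] unfolding Z_def C_def by auto
  qed (auto simp: Z_def)
  then have "(\<Sum>k\<in>UNIV. v k (Z k)) \<le> (\<Sum>k\<in>UNIV. v k (A k))"
    using A_opt unfolding optimal_partition_def by blast
  moreover have "(\<Sum>k\<in>UNIV. v k (Z k)) = v i (Z i) + (\<Sum>k\<in>- {i}. v k (C k))"
    using sum.remove[of UNIV i "\<lambda>k. v k (Z k)"] by (simp add: Z_def Compl_eq_Diff_UNIV)
  moreover have "(\<Sum>k\<in>UNIV. v k (A k)) = v i (A i) + (\<Sum>k\<in>- {i}. v k (A k))"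
    using sum.remove[of UNIV i "\<lambda>k. v k (A k)"] by (simp add: Compl_eq_Diff_UNIV)
  moreover have "(\<Sum>k\<in>- {i}. v k (A k) - v k (C k)) \<le> (\<Sum>k\<in>- {i}. \<Sum>j\<in>A k \<inter> Y i. p j)"
    by (rule sum_mono) (use deviation_lost_value in \<open>auto simp: p_def C_def\<close>)
  moreover have "(\<Sum>k\<in>- {i}. \<Sum>j\<in>A k \<inter> Y i. p j) \<le> (\<Sum>j\<in>Y i. p j)"
    by (rule sum_partition_pieces_le[OF A]) (simp add: p_def min_price_nonneg)
  moreover have "v i (Y i) \<le> v i (Z i)"
    using val partition_unique[OF Y] by (auto simp: Z_def C_def intro: valuation_mono)
  ultimately show ?thesis unfolding p_def by (simp add: sum_subtractf)
qed

end

lemma EW_allocation_optimal: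
  "EW_allocation_rule X \<Longrightarrow> \<forall>k. GS (b k) \<Longrightarrow> optimal_partition b (X b)"
  by (simp add: EW_allocation_rule_def)

lemma GS_truncated_profile: "\<forall>k. GS (v k) \<Longrightarrow> \<forall>k. GS (\<lambda>S. v k (S \<inter> A k))"
  by (simp add: GS_truncate)

lemma non_exposure_if_underbidding:
  fixes X :: "('a::finite \<Rightarrow> 'i::finite set \<Rightarrow> real) \<Rightarrow> 'a \<Rightarrow> 'i set"
  assumes ew: "EW_allocation_rule X" and gs: "GS bi" and under: "\<And>S. bi S \<le> vi S"
  shows "non_exposure X vi i bi"
  unfolding non_exposure_def
proof (intro allI impI)
  fix b :: "'a \<Rightarrow> 'i set \<Rightarrow> real" assume "\<forall>k. k \<noteq> i \<longrightarrow> GS (b k)"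
  then have gs': "\<forall>k. GS ((b(i := bi)) k)" using gs by simp
  have "payment X (b(i := bi)) i \<le> bi (X (b(i := bi)) i)"
    using min_price_individually_rational[OF gs' EW_allocation_optimal[OF ew gs'], of i]
    unfolding payment_def fun_upd_same .
  then show "payment X (b(i := bi)) i \<le> vi (X (b(i := bi)) i)" using under order_trans by blast
qed

context
  fixes v :: "'a::finite \<Rightarrow> 'i::finite set \<Rightarrow> real" and A :: "'a \<Rightarrow> 'i set"
    and X :: "('a \<Rightarrow> 'i set \<Rightarrow> real) \<Rightarrow> 'a \<Rightarrow> 'i set"
  assumes GS_vals: "\<forall>k. GS (v k)" and ew: "EW_allocation_rule X" and A_opt: "optimal_partition v A"
begin

lemma truncated_bids_outcome:
  shows "v i (A i) \<le> v i (X (\<lambda>k S. v k (S \<inter> A k)) i)"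
    and "payment X (\<lambda>k S. v k (S \<inter> A k)) i \<le> 0"
proof -
  have val: "\<forall>k. valuation (v k)" using GS_vals GS_valuation by blast
  have A: "is_partition A" using A_opt unfolding optimal_partition_def by blast
  have "optimal_partition (\<lambda>k S. v k (S \<inter> A k)) (X (\<lambda>k S. v k (S \<inter> A k)))"
    by (rule EW_allocation_optimal[OF ew GS_truncated_profile[OF GS_vals]])
  then show "v i (A i) \<le> v i (X (\<lambda>k S. v k (S \<inter> A k)) i)"
    by (rule truncated_optimal_allocation[OF val A])
  show "payment X (\<lambda>k S. v k (S \<inter> A k)) i \<le> 0"
    unfolding payment_def by (rule sum_nonpos) (rule truncated_min_price_nonpos[OF val A])
qed

lemma truncated_bids_pure_nash: "pure_nash X v (\<lambda>k S. v k (S \<inter> A k))"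
  unfolding pure_nash_def
proof (intro conjI allI impI)
  let ?b = "\<lambda>k S. v k (S \<inter> A k)"
  show "GS (?b k)" for k using GS_truncated_profile[OF GS_vals] by blast
  fix i and bi :: "'i set \<Rightarrow> real" assume gs: "GS bi"
  then have "\<forall>k. GS ((?b(i := bi)) k)" using GS_truncated_profile[OF GS_vals] by simp
  then have "optimal_partition (?b(i := bi)) (X (?b(i := bi)))"
    by (rule EW_allocation_optimal[OF ew])
  then have "utility X (v i) (?b(i := bi)) i \<le> v i (A i)"
    using deviation_utility_le[OF GS_vals A_opt GS_valuation[OF gs]]
    unfolding utility_def payment_def by blast
  also have "\<dots> \<le> utility X (v i) ?b i"
    using truncated_bids_outcome[of i] unfolding utility_def by simp
  finally show "utility X (v i) (?b(i := bi)) i \<le> utility X (v i) ?b i" .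
qed

lemma truncated_bids_efficient: "optimal_partition v (X (\<lambda>k S. v k (S \<inter> A k)))"
  unfolding optimal_partition_def
proof (intro conjI allI impI)
  let ?b = "\<lambda>k S. v k (S \<inter> A k)"
  show "is_partition (X ?b)"
    using EW_allocation_optimal[OF ew GS_truncated_profile[OF GS_vals]]
    unfolding optimal_partition_def by blast
  fix Y :: "'a \<Rightarrow> 'i set" assume "is_partition Y"
  then have "(\<Sum>k\<in>UNIV. v k (Y k)) \<le> (\<Sum>k\<in>UNIV. v k (A k))"
    using A_opt unfolding optimal_partition_def by blast
  also have "\<dots> \<le> (\<Sum>k\<in>UNIV. v k (X ?b k))" by (rule sum_mono) (rule truncated_bids_outcome)
  finally show "(\<Sum>k\<in>UNIV. v k (Y k)) \<le> (\<Sum>k\<in>UNIV. v k (X ?b k))" .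
qed

end

theorem lemma1:
  fixes v :: "'agent::finite \<Rightarrow> 'item::finite set \<Rightarrow> real"
    and X :: "('agent \<Rightarrow> 'item set \<Rightarrow> real) \<Rightarrow> 'agent \<Rightarrow> 'item set"
  assumes "\<forall>i. GS (v i)"
    and "EW_allocation_rule X"
  shows "\<exists>b. pure_nash X v b \<and> optimal_partition v (X b) \<and>
             (\<forall>i. non_exposure X (v i) i (b i))"
proof -
  obtain A where A: "optimal_partition v A" by (rule optimal_partition_exists)
  have "non_exposure X (v i) i (\<lambda>S. v i (S \<inter> A i))" for i
    using assms by (intro non_exposure_if_underbidding GS_truncate)
      (auto intro: valuation_mono GS_valuation)
  then show ?thesis
    using truncated_bids_pure_nash[OF assms A] truncated_bids_efficient[OF assms A] by blast
qed

end
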